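(* Let $L\ge 1$ and $n_1,\dots,n_L\ge 1$ be integers, $N=\sum_l n_l$, and write vectors in $\mathbb{R}^N$ in blocks $x=[x_1^\top,\dots,x_L^\top]^\top$, $x_l\in\mathbb{R}^{n_l}$. Let $g,v\in\mathbb{R}^N$ and $d\in\mathbb{R}^N$ with positive entries, $D=\mathrm{Diag}(d)$, and set $w_l=v_l-g_l\oslash d_l$. Assume each $w_l$ has at least one positive and at least one negative entry. Consider $$\min_{u,\alpha,\beta}\; g^\top(u-v)+\tfrac12(u-v)^\top D(u-v)\quad\text{s.t.}\quad u_l\in\{-\beta_l,0,\alpha_l\}^{n_l},\ \alpha_l>0,\ \beta_l>0,\ l=1,\dots,L.$$ If $(u,\alpha,\beta)$ is a minimizer, then for every $l$, $$u_l=\alpha_l p_l+\beta_l q_l,\qquad p_l=I^+_{\alpha_l/2}(w_l),\quad q_l=I^-_{\beta_l/2}(w_l),$$ $$\alpha_l=\frac{\|p_l\odot d_l\odot w_l\|_1}{\|p_l\odot d_l\|_1},\qquad \beta_l=\frac{\|q_l\odot d_l\odot w_l\|_1}{\|q_l\odot d_l\|_1}.$$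
   Context: $\odot$ and $\oslash$ are element-wise multiplication and division; $\mathrm{Diag}(x)$ is the diagonal matrix with diagonal $x$. For a threshold $\Delta$: $[I^+_\Delta(x)]_i=1$ if $x_i>\Delta$ and $0$ otherwise; $[I^-_\Delta(x)]_i=-1$ if $x_i<-\Delta$ and $0$ otherwise. *)

theory Defs
  imports Complex_Main
begin

text \<open>Block vectors: a vector x in R^N with blocks x_1,...,x_L, x_l in R^(n_l), is
  represented as x :: nat => nat => real, where x l i is the i-th entry (i < n l)
  of block l (l < L). Entries outside these ranges are irrelevant.\<close>

definition Iplus :: "real \<Rightarrow> (nat \<Rightarrow> real) \<Rightarrow> nat \<Rightarrow> real" where
  "Iplus \<Delta> x i = (if x i > \<Delta> then 1 else 0)"

definition Iminus :: "real \<Rightarrow> (nat \<Rightarrow> real) \<Rightarrow> nat \<Rightarrow> real" where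
  "Iminus \<Delta> x i = (if x i < - \<Delta> then -1 else 0)"

definition norm1 :: "nat \<Rightarrow> (nat \<Rightarrow> real) \<Rightarrow> real" where
  "norm1 m x = (\<Sum>i<m. \<bar>x i\<bar>)"

definition objective :: "nat \<Rightarrow> (nat \<Rightarrow> nat) \<Rightarrow> (nat \<Rightarrow> nat \<Rightarrow> real) \<Rightarrow> (nat \<Rightarrow> nat \<Rightarrow> real)
    \<Rightarrow> (nat \<Rightarrow> nat \<Rightarrow> real) \<Rightarrow> (nat \<Rightarrow> nat \<Rightarrow> real) \<Rightarrow> real" where
  "objective L n g v d u =
     (\<Sum>l<L. \<Sum>i<n l. g l i * (u l i - v l i) + (1/2) * d l i * (u l i - v l i)^2)"

definition feasible :: "nat \<Rightarrow> (nat \<Rightarrow> nat) \<Rightarrow> (nat \<Rightarrow> nat \<Rightarrow> real) \<Rightarrow> (nat \<Rightarrow> real)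
    \<Rightarrow> (nat \<Rightarrow> real) \<Rightarrow> bool" where
  "feasible L n u \<alpha> \<beta> \<longleftrightarrow>
     (\<forall>l<L. \<alpha> l > 0 \<and> \<beta> l > 0 \<and> (\<forall>i<n l. u l i \<in> {- \<beta> l, 0, \<alpha> l}))"

definition is_minimizer :: "nat \<Rightarrow> (nat \<Rightarrow> nat) \<Rightarrow> (nat \<Rightarrow> nat \<Rightarrow> real) \<Rightarrow> (nat \<Rightarrow> nat \<Rightarrow> real)
    \<Rightarrow> (nat \<Rightarrow> nat \<Rightarrow> real) \<Rightarrow> (nat \<Rightarrow> nat \<Rightarrow> real) \<Rightarrow> (nat \<Rightarrow> real) \<Rightarrow> (nat \<Rightarrow> real) \<Rightarrow> bool" where
  "is_minimizer L n g v d u \<alpha> \<beta> \<longleftrightarrow>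
     feasible L n u \<alpha> \<beta> \<and>
     (\<forall>u' \<alpha>' \<beta>'. feasible L n u' \<alpha>' \<beta>' \<longrightarrow> objective L n g v d u \<le> objective L n g v d u')"

end

theory Submission imports Defs begin

text \<open>Completing the square, the objective is, up to a constant, half the
  D-weighted squared distance of u to w, and it separates into the blocks; so
  every block of a minimizer is a weighted projection of w_l onto the ternary
  vectors with levels -\<beta>_l, 0, \<alpha>_l, optimized over the levels as well.
  Each coordinate of such a projection takes a nearest level, which gives the
  thresholds \<alpha>_l/2 and -\<beta>_l/2 up to ties; moving \<alpha>_l with its support fixed
  must not help, so \<alpha>_l is the d-weighted mean of w over its support. A tie
  w_i = \<alpha>_l/2 is impossible: moving coordinate i to the other nearest level
  gives another minimizer, and comparing the two mean equations forces
  w_i = \<alpha>_l. The lower level follows by the symmetry u, w \<mapsto> -u, -w.\<close>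

definition wsqdist :: "nat \<Rightarrow> (nat \<Rightarrow> real) \<Rightarrow> (nat \<Rightarrow> real) \<Rightarrow> (nat \<Rightarrow> real) \<Rightarrow> real" where
  "wsqdist n d w x = (\<Sum>i<n. d i * (x i - w i)^2)"

definition ternary :: "nat \<Rightarrow> real \<Rightarrow> real \<Rightarrow> (nat \<Rightarrow> real) \<Rightarrow> bool" where
  "ternary n a b x \<longleftrightarrow> (\<forall>i<n. x i \<in> {-b, 0, a})"

definition ternary_minimizer ::
    "nat \<Rightarrow> (nat \<Rightarrow> real) \<Rightarrow> (nat \<Rightarrow> real) \<Rightarrow> real \<Rightarrow> real \<Rightarrow> (nat \<Rightarrow> real) \<Rightarrow> bool" where
  "ternary_minimizer n d w a b u \<longleftrightarrow> 0 < a \<and> 0 < b \<and> ternary n a b u \<and>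
     (\<forall>x a' b'. 0 < a' \<longrightarrow> 0 < b' \<longrightarrow> ternary n a' b' x \<longrightarrow> wsqdist n d w u \<le> wsqdist n d w x)"

definition block_cost :: "nat \<Rightarrow> (nat \<Rightarrow> real) \<Rightarrow> (nat \<Rightarrow> real) \<Rightarrow> (nat \<Rightarrow> real) \<Rightarrow> (nat \<Rightarrow> real) \<Rightarrow> real" where
  "block_cost m g v d y = (\<Sum>i<m. g i * (y i - v i) + (1/2) * d i * (y i - v i)^2)"

lemma wsqdist_fun_upd:
  assumes "i < n"
  shows "wsqdist n d w (x(i := c)) = wsqdist n d w x - d i * (x i - w i)^2 + d i * (c - w i)^2"
proof -
  have split: "wsqdist n d w y = d i * (y i - w i)^2 + (\<Sum>j\<in>{..<n} - {i}. d j * (y j - w j)^2)" for y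
    unfolding wsqdist_def using assms by (subst sum.remove[of _ i]) auto
  have "(\<Sum>j\<in>{..<n} - {i}. d j * ((x(i := c)) j - w j)^2) = (\<Sum>j\<in>{..<n} - {i}. d j * (x j - w j)^2)"
    by (rule sum.cong) auto
  then show ?thesis using split[of x] split[of "x(i := c)"] by simp
qed

lemma wsqdist_replace_level:
  fixes n :: nat and x :: "nat \<Rightarrow> real" and a t :: real
  defines "S \<equiv> {j. j < n \<and> x j = a}"
  shows "wsqdist n d w (\<lambda>j. if j \<in> S then t else x j) - wsqdist n d w x
       = (t - a) * ((\<Sum>j\<in>S. d j) * (t + a) - 2 * (\<Sum>j\<in>S. d j * w j))"
proof -
  have "wsqdist n d w (\<lambda>j. if j \<in> S then t else x j) - wsqdist n d w x
      = (\<Sum>j<n. if x j = a then d j * ((t - w j)^2 - (a - w j)^2) else 0)"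
    unfolding wsqdist_def S_def
    by (subst sum_subtractf[symmetric]) (rule sum.cong, auto simp: algebra_simps)
  also have "\<dots> = (\<Sum>j\<in>S. (t - a) * (d j * (t + a) - 2 * (d j * w j)))"
    unfolding S_def
    by (subst sum.inter_filter[symmetric]) (auto intro!: sum.cong simp: power2_eq_square algebra_simps)
  also have "\<dots> = (t - a) * ((\<Sum>j\<in>S. d j) * (t + a) - 2 * (\<Sum>j\<in>S. d j * w j))"
    by (simp add: sum_distrib_left[symmetric] sum_distrib_right sum_subtractf)
  finally show ?thesis .
qed

lemma wsqdist_uminus: "wsqdist n d (\<lambda>i. - w i) (\<lambda>i. - x i) = wsqdist n d w x"
  unfolding wsqdist_def by (rule sum.cong) (auto simp: power2_eq_square algebra_simps)

lemma ternary_minimizer_uminus: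
  assumes "ternary_minimizer n d w a b u"
  shows "ternary_minimizer n d (\<lambda>i. - w i) b a (\<lambda>i. - u i)"
  unfolding ternary_minimizer_def
proof (intro conjI allI impI)
  show "0 < b" "0 < a" "ternary n b a (\<lambda>i. - u i)"
    using assms by (auto simp: ternary_minimizer_def ternary_def)
  fix x a' b' assume "0 < a'" "0 < b'" "ternary n a' b' x"
  moreover from \<open>ternary n a' b' x\<close> have "ternary n b' a' (\<lambda>i. - x i)"
    unfolding ternary_def by auto
  ultimately have "wsqdist n d w u \<le> wsqdist n d w (\<lambda>i. - x i)"
    using assms unfolding ternary_minimizer_def by blast
  then show "wsqdist n d (\<lambda>i. - w i) (\<lambda>i. - u i) \<le> wsqdist n d (\<lambda>i. - w i) x"
    using wsqdist_uminus[of n d w u] wsqdist_uminus[of n d w "\<lambda>i. - x i"] by simp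
qed

lemma ternary_minimizer_nearest_level:
  assumes "ternary_minimizer n d w a b u" "\<forall>i<n. 0 < d i" "i < n" "c \<in> {-b, 0, a}"
  shows "(u i - w i)^2 \<le> (c - w i)^2"
proof -
  have "ternary n a b (u(i := c))"
    using assms unfolding ternary_minimizer_def ternary_def by auto
  then have "wsqdist n d w u \<le> wsqdist n d w (u(i := c))"
    using assms(1) unfolding ternary_minimizer_def by blast
  then have "d i * (u i - w i)^2 \<le> d i * (c - w i)^2"
    using wsqdist_fun_upd[OF assms(3)] by simp
  then show ?thesis using assms(2,3) by simp
qed

lemma ternary_minimizer_fun_upd:
  assumes "ternary_minimizer n d w a b u" "i < n" "c \<in> {-b, 0, a}"
    and "(c - w i)^2 = (u i - w i)^2"
  shows "ternary_minimizer n d w a b (u(i := c))"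
  using assms wsqdist_fun_upd[OF assms(2), of d w u c]
  unfolding ternary_minimizer_def ternary_def by auto

lemma ternary_minimizer_level_exists:
  assumes "ternary_minimizer n d w a b u" "\<forall>i<n. 0 < d i" "\<exists>i<n. 0 < w i"
  shows "\<exists>i<n. u i = a"
proof (rule ccontr)
  assume no_a: "\<not> (\<exists>i<n. u i = a)"
  obtain i where i: "i < n" "0 < w i" using assms(3) by blast
  have "ternary n (w i) b (u(i := w i))"
    using assms(1) no_a unfolding ternary_minimizer_def ternary_def by auto
  then have "wsqdist n d w u \<le> wsqdist n d w (u(i := w i))"
    using assms(1) i unfolding ternary_minimizer_def by blast
  then have "d i * (u i - w i)^2 \<le> 0" using wsqdist_fun_upd[OF i(1)] by simp
  then have "u i = w i" using assms(2) i by (auto simp: mult_le_0_iff)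
  moreover have "u i \<in> {-b, 0}" using assms(1) no_a i unfolding ternary_minimizer_def ternary_def by auto
  ultimately show False using assms(1) i unfolding ternary_minimizer_def by auto
qed

lemma ternary_minimizer_weighted_mean:
  fixes u :: "nat \<Rightarrow> real"
  assumes "ternary_minimizer n d w a b u" "\<forall>i<n. 0 < d i"
  defines "S \<equiv> {j. j < n \<and> u j = a}"
  shows "a * (\<Sum>j\<in>S. d j) = (\<Sum>j\<in>S. d j * w j)"
proof (cases "S = {}")
  case False
  have a: "0 < a" and b: "0 < b" using assms(1) by (auto simp: ternary_minimizer_def)
  define D where "D = (\<Sum>j\<in>S. d j)"
  define E where "E = (\<Sum>j\<in>S. d j * w j)"
  have "0 < D" unfolding D_def using False assms(2) by (intro sum_pos) (auto simp: S_def)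
  have "a / 2 \<le> w j" if "j \<in> S" for j
  proof -
    have "(a - w j)^2 \<le> (0 - w j)^2"
      using ternary_minimizer_nearest_level[OF assms(1,2), of j 0] that by (auto simp: S_def)
    then show ?thesis using a by (simp add: power2_eq_square algebra_simps)
  qed
  then have "0 < E" unfolding E_def using False assms(2) a
    by (intro sum_pos) (auto simp: S_def intro!: mult_pos_pos, fastforce)
  define t where "t = E / D"
  have "0 < t" unfolding t_def using \<open>0 < D\<close> \<open>0 < E\<close> by simp
  moreover have "ternary n t b (\<lambda>j. if j \<in> S then t else u j)"
    using assms(1) unfolding ternary_minimizer_def ternary_def S_def by auto
  ultimately have "wsqdist n d w u \<le> wsqdist n d w (\<lambda>j. if j \<in> S then t else u j)"
    using assms(1) b unfolding ternary_minimizer_def by blast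
  then have "0 \<le> (t - a) * (D * (t + a) - 2 * E)"
    using wsqdist_replace_level[where n = n and d = d and w = w and x = u and a = a and t = t]
    unfolding S_def D_def E_def by simp
  also have "\<dots> = - D * (t - a)^2"
    using \<open>0 < D\<close> unfolding t_def by (simp add: power2_eq_square field_simps)
  finally have "t = a" using \<open>0 < D\<close> by (simp add: mult_le_0_iff)
  then show ?thesis using \<open>0 < D\<close> unfolding t_def D_def E_def by (simp add: field_simps)
qed simp

lemma ternary_minimizer_upper_iff:
  assumes "ternary_minimizer n d w a b u" "\<forall>i<n. 0 < d i" "i < n"
  shows "u i = a \<longleftrightarrow> a / 2 < w i"
proof -
  have a: "0 < a" and b: "0 < b" and u_i: "u i \<in> {-b, 0, a}"
    using assms unfolding ternary_minimizer_def ternary_def by auto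
  show ?thesis
  proof
    assume u_a: "u i = a"
    have "(a - w i)^2 \<le> (0 - w i)^2"
      using ternary_minimizer_nearest_level[OF assms, of 0] u_a by simp
    then have "a / 2 \<le> w i" using a by (simp add: power2_eq_square algebra_simps)
    moreover have "w i \<noteq> a / 2"
    proof
      assume tie: "w i = a / 2"
      define S where "S = {j. j < n \<and> u j = a}"
      have "ternary_minimizer n d w a b (u(i := 0))"
        using ternary_minimizer_fun_upd[OF assms(1,3), of 0] u_a tie by (simp add: power2_eq_square)
      from ternary_minimizer_weighted_mean[OF this assms(2)]
      have "a * (\<Sum>j\<in>{j. j < n \<and> (u(i := 0)) j = a}. d j)
          = (\<Sum>j\<in>{j. j < n \<and> (u(i := 0)) j = a}. d j * w j)" .
      moreover have "{j. j < n \<and> (u(i := 0)) j = a} = S - {i}"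
        unfolding S_def using a by auto
      ultimately have "a * (\<Sum>j\<in>S - {i}. d j) = (\<Sum>j\<in>S - {i}. d j * w j)"
        by simp
      moreover have "a * (\<Sum>j\<in>S. d j) = (\<Sum>j\<in>S. d j * w j)"
        unfolding S_def by (rule ternary_minimizer_weighted_mean[OF assms(1,2)])
      moreover have "i \<in> S" "finite S" unfolding S_def using assms(3) u_a by auto
      ultimately have "a * d i = d i * w i"
        by (simp add: sum.remove[of S i] distrib_left)
      then show False using tie a assms(2,3) by force
    qed
    ultimately show "a / 2 < w i" by simp
  next
    assume w_i: "a / 2 < w i"
    show "u i = a"
    proof (rule ccontr)
      assume "u i \<noteq> a"
      then consider "u i = 0" | "u i = -b" using u_i by auto
      then show False
      proof cases
        case 1
        then have "(0 - w i)^2 \<le> (a - w i)^2" using ternary_minimizer_nearest_level[OF assms, of a] by simp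
        then show False using a w_i by (simp add: power2_eq_square algebra_simps)
      next
        case 2
        then have "(-b - w i)^2 \<le> (0 - w i)^2" using ternary_minimizer_nearest_level[OF assms, of 0] by simp
        then have "b * (b + 2 * w i) \<le> 0" by (simp add: power2_eq_square algebra_simps)
        then show False using a b w_i by (simp add: mult_le_0_iff)
      qed
    qed
  qed
qed

lemma norm1_uminus: "norm1 m (\<lambda>i. - x i) = norm1 m x"
  by (simp add: norm1_def)

lemma Iminus_eq_uminus_Iplus: "Iminus \<Delta> x i = - Iplus \<Delta> (\<lambda>j. - x j) i"
  by (auto simp: Iminus_def Iplus_def)

lemma norm1_Iplus_weight:
  assumes "\<forall>i<m. 0 < d i"
  shows "norm1 m (\<lambda>i. Iplus \<Delta> w i * d i) = (\<Sum>i\<in>{i\<in>{..<m}. \<Delta> < w i}. d i)"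
proof -
  have "norm1 m (\<lambda>i. Iplus \<Delta> w i * d i) = (\<Sum>i<m. if \<Delta> < w i then d i else 0)"
    unfolding norm1_def Iplus_def using assms by (intro sum.cong) auto
  also have "\<dots> = (\<Sum>i\<in>{i\<in>{..<m}. \<Delta> < w i}. d i)"
    by (rule sum.inter_filter[symmetric]) simp
  finally show ?thesis .
qed

lemma norm1_Iplus_weighted:
  assumes "\<forall>i<m. 0 < d i" "0 \<le> \<Delta>"
  shows "norm1 m (\<lambda>i. Iplus \<Delta> w i * d i * w i) = (\<Sum>i\<in>{i\<in>{..<m}. \<Delta> < w i}. d i * w i)"
proof -
  have "norm1 m (\<lambda>i. Iplus \<Delta> w i * d i * w i) = (\<Sum>i<m. if \<Delta> < w i then d i * w i else 0)"
    unfolding norm1_def Iplus_def using assms by (intro sum.cong) (auto simp: abs_mult)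
  also have "\<dots> = (\<Sum>i\<in>{i\<in>{..<m}. \<Delta> < w i}. d i * w i)"
    by (rule sum.inter_filter[symmetric]) simp
  finally show ?thesis .
qed

lemma ternary_minimizer_upper_level:
  assumes "ternary_minimizer n d w a b u" "\<forall>i<n. 0 < d i" "\<exists>i<n. 0 < w i"
  shows "a = norm1 n (\<lambda>i. Iplus (a / 2) w i * d i * w i) / norm1 n (\<lambda>i. Iplus (a / 2) w i * d i)"
proof -
  define S where "S = {j. j < n \<and> u j = a}"
  have a: "0 < a" using assms(1) by (simp add: ternary_minimizer_def)
  have level_set: "{j\<in>{..<n}. a / 2 < w j} = S"
    unfolding S_def using ternary_minimizer_upper_iff[OF assms(1,2)] by auto
  have weight: "norm1 n (\<lambda>i. Iplus (a / 2) w i * d i) = (\<Sum>j\<in>S. d j)"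
    using norm1_Iplus_weight[OF assms(2), of "a / 2" w] unfolding level_set .
  have weighted: "norm1 n (\<lambda>i. Iplus (a / 2) w i * d i * w i) = (\<Sum>j\<in>S. d j * w j)"
    using norm1_Iplus_weighted[OF assms(2), of "a / 2" w] a unfolding level_set by simp
  obtain i where "i < n" "u i = a" using ternary_minimizer_level_exists[OF assms] by blast
  then have "0 < (\<Sum>j\<in>S. d j)"
    unfolding S_def using assms(2) by (intro sum_pos2[of _ i]) (auto intro: less_imp_le)
  then show ?thesis
    using ternary_minimizer_weighted_mean[OF assms(1,2)] unfolding weight weighted S_def
    by (simp add: field_simps)
qed

lemma ternary_minimizer_levels:
  assumes "ternary_minimizer n d w a b u" "\<forall>i<n. 0 < d i"
    and "\<exists>i<n. 0 < w i" "\<exists>i<n. w i < 0"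
  defines "p \<equiv> Iplus (a / 2) w" and "q \<equiv> Iminus (b / 2) w"
  shows "(\<forall>i<n. u i = a * p i + b * q i)
      \<and> a = norm1 n (\<lambda>i. p i * d i * w i) / norm1 n (\<lambda>i. p i * d i)
      \<and> b = norm1 n (\<lambda>i. q i * d i * w i) / norm1 n (\<lambda>i. q i * d i)"
proof (intro conjI allI impI)
  have neg: "ternary_minimizer n d (\<lambda>i. - w i) b a (\<lambda>i. - u i)"
    by (rule ternary_minimizer_uminus[OF assms(1)])
  fix i assume i: "i < n"
  have "u i \<in> {-b, 0, a}" "0 < a" "0 < b"
    using assms(1) i unfolding ternary_minimizer_def ternary_def by auto
  then show "u i = a * p i + b * q i"
    using ternary_minimizer_upper_iff[OF assms(1,2) i] ternary_minimizer_upper_iff[OF neg assms(2) i]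
    unfolding p_def q_def Iplus_def Iminus_def by auto
next
  show "a = norm1 n (\<lambda>i. p i * d i * w i) / norm1 n (\<lambda>i. p i * d i)"
    unfolding p_def by (rule ternary_minimizer_upper_level[OF assms(1-3)])
next
  have "b = norm1 n (\<lambda>i. Iplus (b / 2) (\<lambda>j. - w j) i * d i * - w i)
          / norm1 n (\<lambda>i. Iplus (b / 2) (\<lambda>j. - w j) i * d i)"
    by (rule ternary_minimizer_upper_level[OF ternary_minimizer_uminus[OF assms(1)] assms(2)])
      (use assms(4) in auto)
  then show "b = norm1 n (\<lambda>i. q i * d i * w i) / norm1 n (\<lambda>i. q i * d i)"
    unfolding q_def Iminus_eq_uminus_Iplus[of "b / 2" w]
    using norm1_uminus[of n "\<lambda>i. Iplus (b / 2) (\<lambda>j. - w j) i * d i"] by simp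
qed

lemma block_cost_eq_wsqdist:
  assumes "\<forall>i<m. 0 < d i" "\<forall>i<m. w i = v i - g i / d i"
  shows "block_cost m g v d y = wsqdist m d w y / 2 - (\<Sum>i<m. d i * (v i - w i)^2) / 2"
proof -
  have "g i * (y i - v i) + (1/2) * d i * (y i - v i)^2
      = d i * (y i - w i)^2 / 2 - d i * (v i - w i)^2 / 2" if "i < m" for i
  proof -
    have "0 < d i" "w i = v i - g i / d i" using assms that by auto
    then have g_i: "g i = d i * (v i - w i)" by (simp add: field_simps)
    show ?thesis unfolding g_i by (simp add: power2_eq_square field_simps)
  qed
  then show ?thesis
    unfolding block_cost_def wsqdist_def sum_divide_distrib sum_subtractf[symmetric]
    by (rule sum.cong[OF refl]) simp
qed

lemma objective_fun_upd:
  assumes "l < L"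
  shows "objective L n g v d (u(l := y)) - objective L n g v d u
       = block_cost (n l) (g l) (v l) (d l) y - block_cost (n l) (g l) (v l) (d l) (u l)"
proof -
  have split: "objective L n g v d x = block_cost (n l) (g l) (v l) (d l) (x l)
      + (\<Sum>k\<in>{..<L} - {l}. block_cost (n k) (g k) (v k) (d k) (x k))" for x
    unfolding objective_def block_cost_def using assms by (subst sum.remove[of _ l]) auto
  have "(\<Sum>k\<in>{..<L} - {l}. block_cost (n k) (g k) (v k) (d k) ((u(l := y)) k))
      = (\<Sum>k\<in>{..<L} - {l}. block_cost (n k) (g k) (v k) (d k) (u k))"
    by (rule sum.cong) auto
  then show ?thesis using split[of u] split[of "u(l := y)"] by simp
qed

lemma is_minimizer_block:
  assumes "is_minimizer L n g v d u \<alpha> \<beta>" "l < L"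
    and "\<forall>i<n l. 0 < d l i" "\<forall>i<n l. w l i = v l i - g l i / d l i"
  shows "ternary_minimizer (n l) (d l) (w l) (\<alpha> l) (\<beta> l) (u l)"
  unfolding ternary_minimizer_def
proof (intro conjI allI impI)
  show "0 < \<alpha> l" "0 < \<beta> l" "ternary (n l) (\<alpha> l) (\<beta> l) (u l)"
    using assms(1,2) by (auto simp: is_minimizer_def feasible_def ternary_def)
  fix x a' b' assume "0 < a'" "0 < b'" "ternary (n l) a' b' x"
  then have "feasible L n (u(l := x)) (\<alpha>(l := a')) (\<beta>(l := b'))"
    using assms(1) by (auto simp: is_minimizer_def feasible_def ternary_def)
  then have "objective L n g v d u \<le> objective L n g v d (u(l := x))"
    using assms(1) unfolding is_minimizer_def by blast
  then show "wsqdist (n l) (d l) (w l) (u l) \<le> wsqdist (n l) (d l) (w l) x"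
    using objective_fun_upd[OF assms(2), of n g v d u x]
    by (simp add: block_cost_eq_wsqdist[OF assms(3,4)])
qed

theorem proposition4:
  fixes L :: nat and n :: "nat \<Rightarrow> nat"
    and g v d u :: "nat \<Rightarrow> nat \<Rightarrow> real" and \<alpha> \<beta> :: "nat \<Rightarrow> real"
    and w :: "nat \<Rightarrow> nat \<Rightarrow> real"
  assumes L_pos: "L \<ge> 1"
    and n_pos: "\<forall>l<L. n l \<ge> 1"
    and d_pos: "\<forall>l<L. \<forall>i<n l. d l i > 0"
    and w_def: "\<forall>l<L. \<forall>i<n l. w l i = v l i - g l i / d l i"
    and w_pos: "\<forall>l<L. \<exists>i<n l. w l i > 0"
    and w_neg: "\<forall>l<L. \<exists>i<n l. w l i < 0"
    and min: "is_minimizer L n g v d u \<alpha> \<beta>"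
  shows "\<forall>l<L.
     (let p = Iplus (\<alpha> l / 2) (w l); q = Iminus (\<beta> l / 2) (w l) in
        (\<forall>i<n l. u l i = \<alpha> l * p i + \<beta> l * q i)
      \<and> \<alpha> l = norm1 (n l) (\<lambda>i. p i * d l i * w l i) / norm1 (n l) (\<lambda>i. p i * d l i)
      \<and> \<beta> l = norm1 (n l) (\<lambda>i. q i * d l i * w l i) / norm1 (n l) (\<lambda>i. q i * d l i))"
proof -
  have block: "ternary_minimizer (n l) (d l) (w l) (\<alpha> l) (\<beta> l) (u l)" if "l < L" for l
    using is_minimizer_block[OF min that] d_pos w_def that by blast
  show ?thesis
    unfolding Let_def using ternary_minimizer_levels[OF block] d_pos w_pos w_neg by blast
qed

end
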